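(* Let $(\Lambda,d)$ be a $k$-graph. Let $(x;(m,n)),(y;(p,q))\in P_\Lambda$ with $p\not\le d(y)$ and $(x;n)\approx(y;p)$. Define $z=x(0,n\wedge d(x))\,\sigma^{p\wedge d(y)}y$. Then (i) $z\in\Lambda^{\le\infty}$; (ii) $m\wedge d(x)=m\wedge d(z)$ and $n\wedge d(x)=n\wedge d(z)$; (iii) $x(m\wedge d(x),n\wedge d(x))=z(m\wedge d(z),n\wedge d(z))$ and $y(p\wedge d(y),q\wedge d(y))=z(n\wedge d(z),(n+q-p)\wedge d(z))$.
   Context: A $k$-graph $(\Lambda,d)$ is a countable category with a degree functor $d:\Lambda\to\mathbb{N}^k$ satisfying unique factorization (if $d(\lambda)=m+n$ there are unique $\mu,\nu$ with $\lambda=\mu\nu$, $d(\mu)=m$, $d(\nu)=n$); $\Lambda^0$ vertices, $r,s$ range/source, $v\Lambda^n=\{\lambda:r(\lambda)=v,d(\lambda)=n\}$; $e_i$ standard basis, $\le$ coordinatewise, $\vee,\wedge$ coordinatewise max/min. For $m\in(\mathbb{N}\cup\{\infty\})^k$, $\Omega_{k,m}$ is the $k$-graph with objects $\{p\in\mathbb{N}^k:p\le m\}$, morphisms $(p,q)$ with $p\le q\le m$, $r(p,q)=p$, $s(p,q)=q$, $d(p,q)=q-p$. A graph morphism $x:\Omega_{k,m}\to\Lambda$ is a degree-preserving functor; $d(x)=m$, $x(a,b)=x((a,b))$, $x(a)=x(a,a)$. It is a boundary path if there is $n_x\in\mathbb{N}^k$, $n_x\le d(x)$, with $x(p)\Lambda^{e_i}=\emptyset$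 whenever $p\in\mathbb{N}^k$, $n_x\le p\le d(x)$, $p_i=d(x)_i$; $\Lambda^{\le\infty}$ is the set of boundary paths. For $p\in\mathbb{N}^k$, $p\le d(x)$, $\sigma^px(a,b)=x(a+p,b+p)$ on $\Omega_{k,d(x)-p}$. For $\lambda\in\Lambda$ with $s(\lambda)=x(0)$, $\lambda x:\Omega_{k,d(\lambda)+d(x)}\to\Lambda$ is the graph morphism with $(\lambda x)(0,d(\lambda))=\lambda$ and $(\lambda x)(0,p)=\lambda\,x(0,p-d(\lambda))$ for $d(\lambda)\le p\le d(\lambda)+d(x)$. Let $V_\Lambda=\{(x;m):x\in\Lambda^{\le\infty},m\in\mathbb{N}^k,m\not\le d(x)\}$ with $(x;m)\approx(y;p)$ iff $x(m\wedge d(x))=y(p\wedge d(y))$ and $m-m\wedge d(x)=p-p\wedge d(y)$. Let $P_\Lambda=\{(x;(m,n)):x\in\Lambda^{\le\infty},m,n\in\mathbb{N}^k,m\le n,n\not\le d(x)\}$. *)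

theory Defs
  imports Main "HOL-Library.Function_Algebras" "HOL-Library.Extended_Nat" "HOL-Library.Countable_Set"
begin

(* Elements of N^k are functions 'k => nat for a finite index type 'k (|'k| = k);
   elements of (N u {oo})^k are functions 'k => enat. *)

type_synonym 'k deg = "'k \<Rightarrow> nat"

record ('v, 'a, 'k) kgraph =
  Obj :: "'v set"
  Mor :: "'a set"
  src :: "'a \<Rightarrow> 'v"
  rng :: "'a \<Rightarrow> 'v"
  cmp :: "'a \<Rightarrow> 'a \<Rightarrow> 'a"     (* cmp l m = l m, defined when src l = rng m *)
  ident :: "'v \<Rightarrow> 'a"
  deg :: "'a \<Rightarrow> 'k deg"

definition is_kgraph :: "('v, 'a, 'k::finite) kgraph \<Rightarrow> bool" where
  "is_kgraph G \<longleftrightarrow>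
     countable (Obj G) \<and> countable (Mor G) \<and>
     (\<forall>l\<in>Mor G. src G l \<in> Obj G \<and> rng G l \<in> Obj G) \<and>
     (\<forall>v\<in>Obj G. ident G v \<in> Mor G \<and> src G (ident G v) = v \<and> rng G (ident G v) = v) \<and>
     (\<forall>l\<in>Mor G. \<forall>m\<in>Mor G. src G l = rng G m \<longrightarrow>
        cmp G l m \<in> Mor G \<and> src G (cmp G l m) = src G m \<and> rng G (cmp G l m) = rng G l) \<and>
     (\<forall>l\<in>Mor G. \<forall>m\<in>Mor G. \<forall>n\<in>Mor G. src G l = rng G m \<and> src G m = rng G n \<longrightarrow>
        cmp G (cmp G l m) n = cmp G l (cmp G m n)) \<and>
     (\<forall>l\<in>Mor G. cmp G (ident G (rng G l)) l = l \<and> cmp G l (ident G (src G l)) = l) \<and>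
     (\<forall>l\<in>Mor G. \<forall>m\<in>Mor G. src G l = rng G m \<longrightarrow> deg G (cmp G l m) = deg G l + deg G m) \<and>
     (\<forall>v\<in>Obj G. deg G (ident G v) = 0) \<and>
     (\<forall>l\<in>Mor G. \<forall>m n. deg G l = m + n \<longrightarrow>
        (\<exists>!(a, b). a \<in> Mor G \<and> b \<in> Mor G \<and> src G a = rng G b \<and> l = cmp G a b \<and>
                   deg G a = m \<and> deg G b = n))"

definition ebasis :: "'k \<Rightarrow> 'k deg" where
  "ebasis i = (\<lambda>j. if j = i then 1 else 0)"

(* A graph morphism x : Omega_{k,m} -> Lambda is represented by the pair (m, f),
   with d(x) = fst x = m and x(a,b) = snd x a b (values outside a <= b <= m irrelevant). *)
type_synonym ('k, 'a) gmor = "('k \<Rightarrow> enat) \<times> ('k deg \<Rightarrow> 'k deg \<Rightarrow> 'a)"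

definition le_ed :: "'k deg \<Rightarrow> ('k \<Rightarrow> enat) \<Rightarrow> bool" where
  "le_ed p D \<longleftrightarrow> (\<forall>i. enat (p i) \<le> D i)"

definition meet_ed :: "'k deg \<Rightarrow> ('k \<Rightarrow> enat) \<Rightarrow> 'k deg" where
  "meet_ed m D = (\<lambda>i. the_enat (min (enat (m i)) (D i)))"

definition graph_morphism :: "('v, 'a, 'k::finite) kgraph \<Rightarrow> ('k, 'a) gmor \<Rightarrow> bool" where
  "graph_morphism G x \<longleftrightarrow>
     (\<forall>p q. p \<le> q \<and> le_ed q (fst x) \<longrightarrow> snd x p q \<in> Mor G \<and> deg G (snd x p q) = q - p) \<and>
     (\<forall>p q t. p \<le> q \<and> q \<le> t \<and> le_ed t (fst x) \<longrightarrow>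
        src G (snd x p q) = rng G (snd x q t) \<and> cmp G (snd x p q) (snd x q t) = snd x p t) \<and>
     (\<forall>p. le_ed p (fst x) \<longrightarrow> snd x p p = ident G (rng G (snd x p p)))"

definition vtx :: "('v, 'a, 'k) kgraph \<Rightarrow> ('k, 'a) gmor \<Rightarrow> 'k deg \<Rightarrow> 'v" where
  "vtx G x p = rng G (snd x p p)"

definition boundary_path :: "('v, 'a, 'k::finite) kgraph \<Rightarrow> ('k, 'a) gmor \<Rightarrow> bool" where
  "boundary_path G x \<longleftrightarrow> graph_morphism G x \<and>
     (\<exists>nx. le_ed nx (fst x) \<and>
        (\<forall>p i. nx \<le> p \<and> le_ed p (fst x) \<and> enat (p i) = fst x i \<longrightarrow>
           \<not> (\<exists>l\<in>Mor G. rng G l = vtx G x p \<and> deg G l = ebasis i)))"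

definition shift :: "'k deg \<Rightarrow> ('k, 'a) gmor \<Rightarrow> ('k, 'a) gmor" where
  "shift p x = ((\<lambda>i. fst x i - enat (p i)), (\<lambda>a b. snd x (a + p) (b + p)))"

(* lambda x: the graph morphism on Omega_{k, d(lambda)+d(x)} determined by
   (lambda x)(0,p) = lambda x(0, p - d(lambda)) for p >= d(lambda); its segment (a,b)
   is the middle factor of lambda x(0, (b \/ d lambda) - d lambda) of degree b - a
   after a prefix of degree a. *)
definition cat_path :: "('v, 'a, 'k::finite) kgraph \<Rightarrow> 'a \<Rightarrow> ('k, 'a) gmor \<Rightarrow> ('k, 'a) gmor" where
  "cat_path G l x =
     ((\<lambda>i. enat (deg G l i) + fst x i),
      (\<lambda>a b. let t = sup b (deg G l);
                 mu = cmp G l (snd x 0 (t - deg G l))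
             in THE be. \<exists>al ga. al \<in> Mor G \<and> be \<in> Mor G \<and> ga \<in> Mor G \<and>
                   src G al = rng G be \<and> src G be = rng G ga \<and>
                   mu = cmp G (cmp G al be) ga \<and>
                   deg G al = a \<and> deg G be = b - a \<and> deg G ga = t - b))"

definition in_P :: "('v, 'a, 'k::finite) kgraph \<Rightarrow> ('k, 'a) gmor \<Rightarrow> 'k deg \<Rightarrow> 'k deg \<Rightarrow> bool" where
  "in_P G x m n \<longleftrightarrow> boundary_path G x \<and> m \<le> n \<and> \<not> le_ed n (fst x)"

definition in_V :: "('v, 'a, 'k::finite) kgraph \<Rightarrow> ('k, 'a) gmor \<Rightarrow> 'k deg \<Rightarrow> bool" where
  "in_V G x m \<longleftrightarrow> boundary_path G x \<and> \<not> le_ed m (fst x)"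

definition approxV :: "('v, 'a, 'k::finite) kgraph \<Rightarrow> ('k, 'a) gmor \<Rightarrow> 'k deg \<Rightarrow> ('k, 'a) gmor \<Rightarrow> 'k deg \<Rightarrow> bool" where
  "approxV G x m y p \<longleftrightarrow> in_V G x m \<and> in_V G y p \<and>
     vtx G x (meet_ed m (fst x)) = vtx G y (meet_ed p (fst y)) \<and>
     m - meet_ed m (fst x) = p - meet_ed p (fst y)"

end

theory Submission
  imports Defs
begin

(* The path z is the initial segment l = x(0, n /\ d(x)) followed by the tail of y from
   p /\ d(y); the relation (x;n) ~ (y;p) says that the two pieces meet at a common vertex.
   For a morphism l and a path w starting at s(l), every segment (l w)(u,v) is, by unique
   factorisation, the middle factor of the single morphism l w(0,t) for any large enough t.
   Hence l w is again a graph morphism, it agrees with l below d(l) and with w shifted by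
   d(l) above it, and it inherits the boundary condition of w.  Finally
   n - n /\ d(x) = p - p /\ d(y) forces, in each coordinate, either n_i <= d(x)_i and
   p_i <= d(y)_i, or d(x)_i < n_i and d(y)_i < p_i; in both cases the meets with d(z) are
   the ones claimed. *)

lemma add_diff_inverse_deg:
  fixes u v :: "'k deg" assumes "u \<le> v" shows "u + (v - u) = v"
proof
  fix i show "(u + (v - u)) i = v i" using le_funD[OF assms, of i] by simp
qed

lemma diff_add_deg:
  fixes u v w :: "'k deg" assumes "u \<le> v" shows "v - u + w = v + w - u"
proof
  fix i show "(v - u + w) i = (v + w - u) i" using le_funD[OF assms, of i] by simp
qed

lemma diff_diff_deg:
  fixes u v t :: "'k deg" assumes "u \<le> v" "v \<le> t" shows "t - u - (v - u) = t - v"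
proof
  fix i show "(t - u - (v - u)) i = (t - v) i"
    using le_funD[OF assms(1), of i] le_funD[OF assms(2), of i] by simp
qed

lemma le_ed_trans: "p \<le> q \<Longrightarrow> le_ed q D \<Longrightarrow> le_ed p D"
  unfolding le_ed_def le_fun_def by (meson enat_ord_simps(1) order_trans)

lemma le_ed_zero [simp]: "le_ed 0 D"
  by (simp add: le_ed_def flip: zero_enat_def)

lemma le_ed_meet_ed: "le_ed (meet_ed m D) D"
  unfolding le_ed_def meet_ed_def
proof
  fix i show "enat (the_enat (min (enat (m i)) (D i))) \<le> D i"
    by (cases "D i") auto
qed

lemma meet_ed_mono:
  assumes "m \<le> n" shows "meet_ed m D \<le> meet_ed n D"
  unfolding meet_ed_def le_fun_def
proof
  fix i have "m i \<le> n i" using assms by (simp add: le_fun_def)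
  then show "the_enat (min (enat (m i)) (D i)) \<le> the_enat (min (enat (n i)) (D i))"
    by (cases "D i") auto
qed

lemma le_ed_shift_iff:
  assumes "le_ed p D"
  shows "le_ed u (\<lambda>i. D i - enat (p i)) \<longleftrightarrow> le_ed (u + p) D"
  unfolding le_ed_def
proof (intro iff_allI)
  fix i have "enat (p i) \<le> D i" using assms by (simp add: le_ed_def)
  then show "enat (u i) \<le> D i - enat (p i) \<longleftrightarrow> enat ((u + p) i) \<le> D i"
    by (cases "D i") auto
qed

lemma le_ed_add_iff: "le_ed (d + s) (\<lambda>i. enat (d i) + D i) \<longleftrightarrow> le_ed s D"
  unfolding le_ed_def
proof (intro iff_allI)
  fix i show "enat ((d + s) i) \<le> enat (d i) + D i \<longleftrightarrow> enat (s i) \<le> D i"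
    by (cases "D i") auto
qed

lemma le_ed_diff:
  assumes "le_ed t (\<lambda>i. enat (d i) + D i)" shows "le_ed (t - d) D"
  unfolding le_ed_def
proof
  fix i have "enat (t i) \<le> enat (d i) + D i" using assms by (simp add: le_ed_def)
  then show "enat ((t - d) i) \<le> D i" by (cases "D i") auto
qed

lemma le_ed_sup:
  assumes "le_ed t (\<lambda>i. enat (d i) + D i)" shows "le_ed (sup t d) (\<lambda>i. enat (d i) + D i)"
  unfolding le_ed_def
proof
  fix i have "enat (t i) \<le> enat (d i) + D i" using assms by (simp add: le_ed_def)
  then show "enat (sup t d i) \<le> enat (d i) + D i" by (cases "D i") (auto simp: sup_nat_def)
qed

lemma meet_ed_glue_coord:
  fixes X Y :: enat
  assumes a: "a = the_enat (min (enat n) X)" and b: "b = the_enat (min (enat p) Y)"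
    and glue: "n - a = p - b" and "m \<le> n" "p \<le> q"
  shows "the_enat (min (enat m) (enat a + (Y - enat b))) = the_enat (min (enat m) X)" (is ?thesis1)
    and "the_enat (min (enat n) (enat a + (Y - enat b))) = a" (is ?thesis2)
    and "the_enat (min (enat (n + q - p)) (enat a + (Y - enat b))) = a + (the_enat (min (enat q) Y) - b)"
      (is ?thesis3)
proof -
  consider (inside) "enat n \<le> X" "a = n" "b = p" "enat p \<le> Y"
    | (outside) "X = enat a" "Y = enat b" "a < n"
  proof (cases "enat n \<le> X")
    case True
    then have "a = n" using a by (cases X) auto
    with b glue have "b = p" by (cases Y) (auto simp: min_def split: if_splits)
    with b have "enat p \<le> Y" by (cases Y) (auto simp: min_def split: if_splits)
    with that(1) True \<open>a = n\<close> \<open>b = p\<close> show ?thesis by blast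
  next
    case False
    with a have "X = enat a" by (cases X) auto
    moreover from False a have "a < n" by (cases X) auto
    moreover from \<open>a < n\<close> b glue have "Y = enat b" by (cases Y) (auto simp: min_def split: if_splits)
    ultimately show ?thesis using that(2) by blast
  qed
  then have "?thesis1 \<and> ?thesis2 \<and> ?thesis3"
  proof cases
    case inside
    with \<open>m \<le> n\<close> have ?thesis1 by (cases X; cases Y) (auto simp: min_def)
    moreover from inside have ?thesis2 by (cases Y) (auto simp: min_def)
    moreover from inside \<open>p \<le> q\<close> have ?thesis3 by (cases Y) (auto simp: min_def)
    ultimately show ?thesis by blast
  next
    case outside
    with \<open>p \<le> q\<close> show ?thesis by (auto simp: min_def)
  qed
  then show ?thesis1 ?thesis2 ?thesis3 by blast+
qed

lemma meet_ed_glue: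
  fixes D E :: "'k \<Rightarrow> enat"
  assumes glue: "n - meet_ed n D = p - meet_ed p E" and "m \<le> n" "p \<le> q"
  defines "F \<equiv> \<lambda>i. enat (meet_ed n D i) + (E i - enat (meet_ed p E i))"
  shows "meet_ed m F = meet_ed m D" and "meet_ed n F = meet_ed n D"
    and "meet_ed (n + q - p) F = meet_ed n D + (meet_ed q E - meet_ed p E)"
proof -
  have "meet_ed m F i = meet_ed m D i \<and> meet_ed n F i = meet_ed n D i \<and>
      meet_ed (n + q - p) F i = meet_ed n D i + (meet_ed q E i - meet_ed p E i)" for i
  proof -
    define a b where "a = meet_ed n D i" and "b = meet_ed p E i"
    have meet_F: "meet_ed k F i = the_enat (min (enat (k i)) (enat a + (E i - enat b)))" for k
      by (simp add: meet_ed_def F_def a_def b_def)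
    have meet_D: "meet_ed k D i = the_enat (min (enat (k i)) (D i))"
      and meet_E: "meet_ed k E i = the_enat (min (enat (k i)) (E i))" for k
      by (simp_all add: meet_ed_def)
    have "n i - a = p i - b"
      using fun_cong[OF glue, of i] by (simp add: a_def b_def)
    from meet_ed_glue_coord[OF meet_D[of n, folded a_def] meet_E[of p, folded b_def] this
        le_funD[OF assms(2)] le_funD[OF assms(3)]]
    show ?thesis
      unfolding meet_F meet_D meet_E a_def b_def by simp
  qed
  then show "meet_ed m F = meet_ed m D" and "meet_ed n F = meet_ed n D"
    and "meet_ed (n + q - p) F = meet_ed n D + (meet_ed q E - meet_ed p E)"
    by (simp_all add: fun_eq_iff)
qed

lemma graph_morphismI:
  assumes "\<And>p q. p \<le> q \<Longrightarrow> le_ed q (fst x) \<Longrightarrow> snd x p q \<in> Mor G"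
    and "\<And>p q. p \<le> q \<Longrightarrow> le_ed q (fst x) \<Longrightarrow> deg G (snd x p q) = q - p"
    and "\<And>p q t. p \<le> q \<Longrightarrow> q \<le> t \<Longrightarrow> le_ed t (fst x) \<Longrightarrow>
      src G (snd x p q) = rng G (snd x q t) \<and> cmp G (snd x p q) (snd x q t) = snd x p t"
    and "\<And>p. le_ed p (fst x) \<Longrightarrow> snd x p p = ident G (rng G (snd x p p))"
  shows "graph_morphism G x"
  using assms unfolding graph_morphism_def by blast

lemma graph_morphism_in_Mor:
  "graph_morphism G x \<Longrightarrow> p \<le> q \<Longrightarrow> le_ed q (fst x) \<Longrightarrow> snd x p q \<in> Mor G"
  unfolding graph_morphism_def by blast

lemma graph_morphism_deg:
  "graph_morphism G x \<Longrightarrow> p \<le> q \<Longrightarrow> le_ed q (fst x) \<Longrightarrow> deg G (snd x p q) = q - p"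
  unfolding graph_morphism_def by blast

lemma graph_morphism_cmp:
  assumes "graph_morphism G x" "p \<le> q" "q \<le> t" "le_ed t (fst x)"
  shows "src G (snd x p q) = rng G (snd x q t)" "cmp G (snd x p q) (snd x q t) = snd x p t"
  using assms unfolding graph_morphism_def by blast+

lemma graph_morphism_ident:
  "graph_morphism G x \<Longrightarrow> le_ed p (fst x) \<Longrightarrow> snd x p p = ident G (vtx G x p)"
  unfolding graph_morphism_def vtx_def by blast

lemma graph_morphism_src:
  "graph_morphism G x \<Longrightarrow> p \<le> q \<Longrightarrow> le_ed q (fst x) \<Longrightarrow> src G (snd x p q) = vtx G x q"
  unfolding vtx_def using graph_morphism_cmp[of G x p q q] by auto

lemma graph_morphism_rng:
  assumes "graph_morphism G x" "p \<le> q" "le_ed q (fst x)"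
  shows "rng G (snd x p q) = vtx G x p"
proof -
  have p: "le_ed p (fst x)" using le_ed_trans assms(2,3) .
  have "src G (snd x p p) = rng G (snd x p q)"
    using graph_morphism_cmp(1)[OF assms(1) order_refl assms(2,3)] .
  moreover have "src G (snd x p p) = vtx G x p"
    using graph_morphism_src[OF assms(1) order_refl p] .
  ultimately show ?thesis by simp
qed

lemma fst_shift [simp]: "fst (shift p x) = (\<lambda>i. fst x i - enat (p i))"
  by (simp add: shift_def)

lemma snd_shift [simp]: "snd (shift p x) u v = snd x (u + p) (v + p)"
  by (simp add: shift_def)

lemma vtx_shift [simp]: "vtx G (shift p x) u = vtx G x (u + p)"
  by (simp add: vtx_def)

lemma graph_morphism_shift:
  assumes x: "graph_morphism G x" and p: "le_ed p (fst x)"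
  shows "graph_morphism G (shift p x)"
proof (rule graph_morphismI, unfold fst_shift snd_shift le_ed_shift_iff[OF p])
  fix u v assume "u \<le> v" "le_ed (v + p) (fst x)"
  moreover have "u + p \<le> v + p" using \<open>u \<le> v\<close> by (simp add: le_fun_def)
  ultimately show "snd x (u + p) (v + p) \<in> Mor G" "deg G (snd x (u + p) (v + p)) = v - u"
    using graph_morphism_in_Mor[OF x] graph_morphism_deg[OF x] by (simp_all add: fun_eq_iff)
next
  fix u v w assume "u \<le> v" "v \<le> w" "le_ed (w + p) (fst x)"
  moreover have "u + p \<le> v + p" "v + p \<le> w + p" using \<open>u \<le> v\<close> \<open>v \<le> w\<close> by (simp_all add: le_fun_def)
  ultimately show "src G (snd x (u + p) (v + p)) = rng G (snd x (v + p) (w + p)) \<and>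
      cmp G (snd x (u + p) (v + p)) (snd x (v + p) (w + p)) = snd x (u + p) (w + p)"
    using graph_morphism_cmp[OF x] by blast
next
  fix u assume "le_ed (u + p) (fst x)"
  then show "snd x (u + p) (u + p) = ident G (rng G (snd x (u + p) (u + p)))"
    using x unfolding graph_morphism_def by blast
qed

lemma boundary_path_shift:
  assumes x: "boundary_path G x" and p: "le_ed p (fst x)"
  shows "boundary_path G (shift p x)"
proof -
  obtain nx where nx: "le_ed nx (fst x)"
    and no_edge: "\<And>u i. nx \<le> u \<Longrightarrow> le_ed u (fst x) \<Longrightarrow> enat (u i) = fst x i \<Longrightarrow>
        \<not> (\<exists>l\<in>Mor G. rng G l = vtx G x u \<and> deg G l = ebasis i)"
    using x unfolding boundary_path_def by blast
  have "le_ed (nx - p) (fst (shift p x))"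
  proof -
    have "nx - p + p = sup nx p" by (simp add: fun_eq_iff sup_nat_def max_def)
    moreover have "le_ed (sup nx p) (fst x)"
      using nx p by (simp add: le_ed_def sup_nat_def max_def)
    ultimately show ?thesis by (simp add: le_ed_shift_iff[OF p])
  qed
  moreover have "\<not> (\<exists>l\<in>Mor G. rng G l = vtx G (shift p x) u \<and> deg G l = ebasis i)"
    if "nx - p \<le> u" "le_ed u (fst (shift p x))" "enat (u i) = fst (shift p x) i" for u i
  proof -
    have "enat (p i) \<le> fst x i" using p by (simp add: le_ed_def)
    with that(3) have "enat ((u + p) i) = fst x i" by (cases "fst x i") auto
    moreover have "nx \<le> u + p"
      using le_funD[OF that(1)] by (intro le_funI) (simp add: le_diff_conv)
    ultimately show ?thesis
      using no_edge that(2) le_ed_shift_iff[OF p] by simp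
  qed
  ultimately show ?thesis
    using graph_morphism_shift x p unfolding boundary_path_def by blast
qed

lemma fst_cat_path [simp]: "fst (cat_path G l x) = (\<lambda>i. enat (deg G l i) + fst x i)"
  by (simp add: cat_path_def)

definition segment :: "('v, 'a, 'k) kgraph \<Rightarrow> 'a \<Rightarrow> 'k deg \<Rightarrow> 'k deg \<Rightarrow> 'a" where
  "segment G w u v = (THE be. \<exists>al ga. al \<in> Mor G \<and> be \<in> Mor G \<and> ga \<in> Mor G \<and>
     src G al = rng G be \<and> src G be = rng G ga \<and> w = cmp G (cmp G al be) ga \<and>
     deg G al = u \<and> deg G be = v - u \<and> deg G ga = deg G w - v)"

locale k_graph =
  fixes G :: "('v, 'a, 'k::finite) kgraph"
  assumes is_kgraph: "is_kgraph G"
begin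

lemma src_in_Obj: "l \<in> Mor G \<Longrightarrow> src G l \<in> Obj G"
  and rng_in_Obj: "l \<in> Mor G \<Longrightarrow> rng G l \<in> Obj G"
  using is_kgraph unfolding is_kgraph_def by simp_all

lemma ident_in_Mor [simp]: "v \<in> Obj G \<Longrightarrow> ident G v \<in> Mor G"
  and src_ident [simp]: "v \<in> Obj G \<Longrightarrow> src G (ident G v) = v"
  and rng_ident [simp]: "v \<in> Obj G \<Longrightarrow> rng G (ident G v) = v"
  and deg_ident [simp]: "v \<in> Obj G \<Longrightarrow> deg G (ident G v) = 0"
  using is_kgraph unfolding is_kgraph_def by simp_all

lemma cmp_in_Mor [simp]: "l \<in> Mor G \<Longrightarrow> m \<in> Mor G \<Longrightarrow> src G l = rng G m \<Longrightarrow> cmp G l m \<in> Mor G"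
  and src_cmp [simp]: "l \<in> Mor G \<Longrightarrow> m \<in> Mor G \<Longrightarrow> src G l = rng G m \<Longrightarrow> src G (cmp G l m) = src G m"
  and rng_cmp [simp]: "l \<in> Mor G \<Longrightarrow> m \<in> Mor G \<Longrightarrow> src G l = rng G m \<Longrightarrow> rng G (cmp G l m) = rng G l"
  and deg_cmp [simp]: "l \<in> Mor G \<Longrightarrow> m \<in> Mor G \<Longrightarrow> src G l = rng G m \<Longrightarrow>
    deg G (cmp G l m) = deg G l + deg G m"
  using is_kgraph unfolding is_kgraph_def by simp_all

lemma cmp_assoc:
  "l \<in> Mor G \<Longrightarrow> m \<in> Mor G \<Longrightarrow> n \<in> Mor G \<Longrightarrow> src G l = rng G m \<Longrightarrow> src G m = rng G n \<Longrightarrow>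
    cmp G (cmp G l m) n = cmp G l (cmp G m n)"
  using is_kgraph unfolding is_kgraph_def by simp

lemma cmp_ident_left: "l \<in> Mor G \<Longrightarrow> cmp G (ident G (rng G l)) l = l"
  and cmp_ident_right: "l \<in> Mor G \<Longrightarrow> cmp G l (ident G (src G l)) = l"
  using is_kgraph unfolding is_kgraph_def by simp_all

lemma unique_factorization:
  assumes "l \<in> Mor G" "deg G l = m + n"
  shows "\<exists>!(a, b). a \<in> Mor G \<and> b \<in> Mor G \<and> src G a = rng G b \<and> l = cmp G a b \<and>
    deg G a = m \<and> deg G b = n"
proof -
  have "\<forall>l\<in>Mor G. \<forall>m n. deg G l = m + n \<longrightarrow>
      (\<exists>!(a, b). a \<in> Mor G \<and> b \<in> Mor G \<and> src G a = rng G b \<and> l = cmp G a b \<and>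
        deg G a = m \<and> deg G b = n)"
    using is_kgraph unfolding is_kgraph_def by (elim conjE) assumption
  from this[rule_format, OF assms] show ?thesis .
qed

lemma factorization_exists:
  assumes "w \<in> Mor G" "u \<le> deg G w"
  obtains a b where "a \<in> Mor G" "b \<in> Mor G" "src G a = rng G b" "w = cmp G a b"
    "deg G a = u" "deg G b = deg G w - u"
proof -
  have "deg G w = u + (deg G w - u)"
    using add_diff_inverse_deg[OF assms(2)] by simp
  from unique_factorization[OF assms(1) this] show ?thesis
    using that by blast
qed

lemma factorization_unique:
  assumes "a \<in> Mor G" "b \<in> Mor G" "src G a = rng G b"
    and "a' \<in> Mor G" "b' \<in> Mor G" "src G a' = rng G b'"
    and "cmp G a b = cmp G a' b'" "deg G a = deg G a'"
  shows "a = a'" "b = b'"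
proof -
  have deg_ab: "deg G (cmp G a b) = deg G a + deg G b" using assms(1-3) by (rule deg_cmp)
  have "deg G (cmp G a' b') = deg G a' + deg G b'" using assms(4-6) by (rule deg_cmp)
  then have "deg G b = deg G b'" using deg_ab assms(7,8) by (metis add_left_cancel)
  have "\<exists>!(c, d). c \<in> Mor G \<and> d \<in> Mor G \<and> src G c = rng G d \<and> cmp G a b = cmp G c d \<and>
      deg G c = deg G a \<and> deg G d = deg G b"
    using unique_factorization[OF cmp_in_Mor[OF assms(1-3)] deg_ab] .
  then have "(a, b) = (a', b')"
    by (rule ex1_iff_ex_Uniq[THEN iffD1, THEN conjunct2, THEN Uniq_D])
      (use assms \<open>deg G b = deg G b'\<close> in simp_all)
  then show "a = a'" "b = b'" by simp_all
qed

lemma deg_zero_ident: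
  assumes "l \<in> Mor G" "deg G l = 0"
  shows "l = ident G (rng G l)"
proof -
  have "cmp G (ident G (rng G l)) l = cmp G l (ident G (src G l))"
    using assms cmp_ident_left cmp_ident_right by simp
  then show ?thesis
    using factorization_unique(1)[of "ident G (rng G l)" l l "ident G (src G l)"]
      assms src_in_Obj rng_in_Obj by simp
qed

lemma segment_eqI:
  assumes "al \<in> Mor G" "be \<in> Mor G" "ga \<in> Mor G" "src G al = rng G be" "src G be = rng G ga"
    and "w = cmp G (cmp G al be) ga" "deg G al = u" "deg G be = v - u" "deg G ga = deg G w - v"
  shows "segment G w u v = be"
  unfolding segment_def
proof (rule the_equality)
  fix be' assume "\<exists>al' ga'. al' \<in> Mor G \<and> be' \<in> Mor G \<and> ga' \<in> Mor G \<and>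
     src G al' = rng G be' \<and> src G be' = rng G ga' \<and> w = cmp G (cmp G al' be') ga' \<and>
     deg G al' = u \<and> deg G be' = v - u \<and> deg G ga' = deg G w - v"
  then obtain al' ga' where al': "al' \<in> Mor G" "be' \<in> Mor G" "ga' \<in> Mor G"
    "src G al' = rng G be'" "src G be' = rng G ga'" "w = cmp G (cmp G al' be') ga'"
    "deg G al' = u" "deg G be' = v - u"
    by blast
  have "cmp G al' be' = cmp G al be"
    using factorization_unique(1)[of "cmp G al' be'" ga' "cmp G al be" ga] assms al' by simp
  then show "be' = be"
    using factorization_unique(2)[of al' be' al be] assms al' by simp
qed (use assms in blast)

lemma segment_factorization:
  assumes "w \<in> Mor G" "u \<le> v" "v \<le> deg G w"
  obtains al be ga where "al \<in> Mor G" "be \<in> Mor G" "ga \<in> Mor G"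
    "src G al = rng G be" "src G be = rng G ga" "w = cmp G (cmp G al be) ga"
    "deg G al = u" "deg G be = v - u" "deg G ga = deg G w - v" "segment G w u v = be"
proof -
  obtain w' ga where w': "w' \<in> Mor G" "ga \<in> Mor G" "src G w' = rng G ga" "w = cmp G w' ga"
    "deg G w' = v" "deg G ga = deg G w - v"
    using factorization_exists[OF assms(1,3)] .
  obtain al be where al: "al \<in> Mor G" "be \<in> Mor G" "src G al = rng G be" "w' = cmp G al be"
    "deg G al = u" "deg G be = v - u"
    using factorization_exists[of w' u] w'(1,5) assms(2) by metis
  have src_be: "src G be = rng G ga" using al(1-4) w'(3) by simp
  have w: "w = cmp G (cmp G al be) ga" using al(4) w'(4) by simp
  show ?thesis
    using that[OF al(1,2) w'(2) al(3) src_be w al(5,6) w'(6)]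
      segment_eqI[OF al(1,2) w'(2) al(3) src_be w al(5,6) w'(6)] .
qed

lemma segment_in_Mor: "w \<in> Mor G \<Longrightarrow> u \<le> v \<Longrightarrow> v \<le> deg G w \<Longrightarrow> segment G w u v \<in> Mor G"
  and deg_segment: "w \<in> Mor G \<Longrightarrow> u \<le> v \<Longrightarrow> v \<le> deg G w \<Longrightarrow> deg G (segment G w u v) = v - u"
  by (metis segment_factorization)+

lemma segment_cmp_segment:
  assumes "w \<in> Mor G" "u \<le> v" "v \<le> t" "t \<le> deg G w"
  shows "src G (segment G w u v) = rng G (segment G w v t)"
    and "cmp G (segment G w u v) (segment G w v t) = segment G w u t"
proof -
  have "u \<le> t" using assms(2,3) by (rule order_trans)
  obtain al s ga where al: "al \<in> Mor G" "s \<in> Mor G" "ga \<in> Mor G" "src G al = rng G s"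
      "src G s = rng G ga"
    and w: "w = cmp G (cmp G al s) ga"
    and deg: "deg G al = u" "deg G s = t - u" "deg G ga = deg G w - t"
    and seg_ut: "segment G w u t = s"
    using segment_factorization[OF assms(1) \<open>u \<le> t\<close> assms(4)] by blast
  have "v - u \<le> deg G s" using deg(2) assms(3) by (simp add: le_fun_def diff_le_mono)
  moreover have "deg G s - (v - u) = t - v" using deg(2) diff_diff_deg[OF assms(2,3)] by simp
  ultimately obtain b c where bc: "b \<in> Mor G" "c \<in> Mor G" "src G b = rng G c"
    and s: "s = cmp G b c" and deg_bc: "deg G b = v - u" "deg G c = t - v"
    using factorization_exists[OF al(2)] by metis
  have src_al: "src G al = rng G b" and src_c: "src G c = rng G ga"
    using al(4,5) bc s by simp_all
  have ab: "cmp G al b \<in> Mor G" "src G (cmp G al b) = rng G c" "deg G (cmp G al b) = v"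
    using al(1) bc src_al deg(1) deg_bc(1) add_diff_inverse_deg[OF assms(2)] by simp_all
  have cga: "cmp G c ga \<in> Mor G" "src G b = rng G (cmp G c ga)" "deg G (cmp G c ga) = deg G w - v"
    using bc al(3) src_c deg_bc(2) deg(3) diff_add_deg[OF assms(3)] add_diff_inverse_deg[OF assms(4)]
    by simp_all
  have w_abc: "w = cmp G (cmp G (cmp G al b) c) ga"
    using w s cmp_assoc[OF al(1) bc(1,2) src_al bc(3)] by simp
  have w_ab_cga: "w = cmp G (cmp G al b) (cmp G c ga)"
    using w_abc cmp_assoc[OF ab(1) bc(2) al(3) ab(2) src_c] by simp
  have seg_uv: "segment G w u v = b"
    using segment_eqI[OF al(1) bc(1) cga(1) src_al cga(2) w_ab_cga deg(1) deg_bc(1) cga(3)] .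
  have seg_vt: "segment G w v t = c"
    using segment_eqI[OF ab(1) bc(2) al(3) ab(2) src_c w_abc ab(3) deg_bc(2) deg(3)] .
  show "src G (segment G w u v) = rng G (segment G w v t)"
    and "cmp G (segment G w u v) (segment G w v t) = segment G w u t"
    using seg_uv seg_vt seg_ut s bc(3) by simp_all
qed

lemma segment_cmp_left:
  assumes "f \<in> Mor G" "g \<in> Mor G" "src G f = rng G g" "u \<le> v" "v \<le> deg G f"
  shows "segment G (cmp G f g) u v = segment G f u v"
proof -
  obtain al s ga where al: "al \<in> Mor G" "s \<in> Mor G" "ga \<in> Mor G" "src G al = rng G s"
      "src G s = rng G ga"
    and f: "f = cmp G (cmp G al s) ga"
    and deg: "deg G al = u" "deg G s = v - u" "deg G ga = deg G f - v"
    and seg: "segment G f u v = s"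
    using segment_factorization[OF assms(1,4,5)] by blast
  have src_ga: "src G ga = rng G g" using assms(3) al f by simp
  have "cmp G f g = cmp G (cmp G al s) (cmp G ga g)"
    using f cmp_assoc[OF _ al(3) assms(2) _ src_ga] al by simp
  moreover have "deg G (cmp G ga g) = deg G (cmp G f g) - v"
    using al(3) assms src_ga deg(3) diff_add_deg[OF assms(5)] by simp
  ultimately have "segment G (cmp G f g) u v = s"
    using segment_eqI[OF al(1,2)] al(3-5) assms(2) src_ga deg(1,2) by simp
  with seg show ?thesis by simp
qed

lemma segment_cmp_right:
  assumes "f \<in> Mor G" "g \<in> Mor G" "src G f = rng G g"
  shows "segment G (cmp G f g) (deg G f) (deg G f + deg G g) = g"
proof (rule segment_eqI)
  show "cmp G f g = cmp G (cmp G f g) (ident G (src G g))"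
    using assms cmp_ident_right[of "cmp G f g"] by simp
qed (use assms src_in_Obj in \<open>simp_all add: fun_eq_iff\<close>)

lemma segment_path:
  assumes x: "graph_morphism G x" and "u \<le> v" "v \<le> t" "le_ed t (fst x)"
  shows "segment G (snd x 0 t) u v = snd x u v"
proof -
  have "0 \<le> u" by (simp add: le_fun_def)
  have v: "le_ed v (fst x)" using le_ed_trans assms(3,4) .
  have u: "le_ed u (fst x)" using le_ed_trans assms(2) v .
  note mor = graph_morphism_in_Mor[OF x] and deg = graph_morphism_deg[OF x]
    and src = graph_morphism_cmp(1)[OF x] and cmp = graph_morphism_cmp(2)[OF x]
  have "snd x 0 t = cmp G (cmp G (snd x 0 u) (snd x u v)) (snd x v t)"
    using cmp[OF \<open>0 \<le> u\<close> assms(2) v] cmp[OF order_trans[OF \<open>0 \<le> u\<close> assms(2)] assms(3,4)] by simp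
  moreover have "deg G (snd x v t) = deg G (snd x 0 t) - v"
    using deg[OF assms(3,4)] deg[OF order_trans[OF \<open>0 \<le> u\<close> order_trans[OF assms(2,3)]] assms(4)]
    by simp
  ultimately show ?thesis
    using segment_eqI[OF mor[OF \<open>0 \<le> u\<close> u] mor[OF assms(2) v] mor[OF assms(3,4)]
        src[OF \<open>0 \<le> u\<close> assms(2) v] src[OF assms(2,3,4)]]
      deg[OF \<open>0 \<le> u\<close> u] deg[OF assms(2) v]
    by simp
qed

context
  fixes l :: 'a and x :: "('k, 'a) gmor"
  assumes l: "l \<in> Mor G" and x: "graph_morphism G x" and src_l: "src G l = vtx G x 0"
begin

lemma cmp_initial_path:
  assumes "le_ed s (fst x)"
  shows "cmp G l (snd x 0 s) \<in> Mor G" and "deg G (cmp G l (snd x 0 s)) = deg G l + s"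
  using l assms graph_morphism_in_Mor[OF x] graph_morphism_deg[OF x] graph_morphism_rng[OF x] src_l
  by simp_all

lemma snd_cat_path:
  assumes s: "le_ed s (fst x)" and "u \<le> v" "v \<le> deg G l + s"
  shows "snd (cat_path G l x) u v = segment G (cmp G l (snd x 0 s)) u v"
proof -
  \<comment> \<open>the length of the initial path used by \<open>cat_path_def\<close>\<close>
  define r where "r = sup v (deg G l) - deg G l"
  have "r \<le> s"
  proof (rule le_funI)
    fix i show "r i \<le> s i" using le_funD[OF assms(3), of i] by (simp add: r_def sup_nat_def)
  qed
  then have r: "le_ed r (fst x)" using le_ed_trans s by blast
  have v_r: "v \<le> deg G l + r" and sup_v: "sup v (deg G l) = deg G l + r"
    unfolding r_def by (simp_all add: add_diff_inverse_deg)
  have "0 \<le> r" by (simp add: le_fun_def)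
  have X: "snd x 0 r \<in> Mor G" "src G l = rng G (snd x 0 r)"
    using graph_morphism_in_Mor[OF x \<open>0 \<le> r\<close> r] graph_morphism_rng[OF x \<open>0 \<le> r\<close> r] src_l
    by simp_all
  have Y: "snd x r s \<in> Mor G" using graph_morphism_in_Mor[OF x \<open>r \<le> s\<close> s] .
  have XY: "src G (snd x 0 r) = rng G (snd x r s)"
    using graph_morphism_cmp(1)[OF x \<open>0 \<le> r\<close> \<open>r \<le> s\<close> s] .
  have lX: "cmp G l (snd x 0 r) \<in> Mor G" "src G (cmp G l (snd x 0 r)) = rng G (snd x r s)"
    using l X XY by simp_all
  have "deg G (cmp G l (snd x 0 (sup v (deg G l) - deg G l))) = sup v (deg G l)"
    using cmp_initial_path(2)[OF r] sup_v unfolding r_def by simp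
  then have "snd (cat_path G l x) u v = segment G (cmp G l (snd x 0 r)) u v"
    unfolding cat_path_def segment_def Let_def r_def by simp
  also have "\<dots> = segment G (cmp G (cmp G l (snd x 0 r)) (snd x r s)) u v"
    using segment_cmp_left[OF lX(1) Y(1) lX(2) assms(2)] v_r cmp_initial_path(2)[OF r] by simp
  also have "cmp G (cmp G l (snd x 0 r)) (snd x r s) = cmp G l (snd x 0 s)"
    using cmp_assoc[OF l X(1) Y(1) X(2) XY] graph_morphism_cmp(2)[OF x \<open>0 \<le> r\<close> \<open>r \<le> s\<close> s] by simp
  finally show ?thesis .
qed

lemma graph_morphism_cat_path: "graph_morphism G (cat_path G l x)"
proof -
  have path: "\<exists>s. le_ed s (fst x) \<and> w \<le> deg G l + s \<and>
      (\<forall>u v. u \<le> v \<longrightarrow> v \<le> w \<longrightarrow> snd (cat_path G l x) u v = segment G (cmp G l (snd x 0 s)) u v)"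
    if "le_ed w (fst (cat_path G l x))" for w
  proof (intro exI conjI allI impI)
    let ?s = "sup w (deg G l) - deg G l"
    show s: "le_ed ?s (fst x)" using le_ed_diff[OF le_ed_sup] that by simp
    show "w \<le> deg G l + ?s" by (simp add: add_diff_inverse_deg)
    then show "snd (cat_path G l x) u v = segment G (cmp G l (snd x 0 ?s)) u v"
      if "u \<le> v" "v \<le> w" for u v
      using snd_cat_path[OF s] that order_trans by blast
  qed
  show ?thesis
  proof (rule graph_morphismI)
    fix u v assume "u \<le> v" "le_ed v (fst (cat_path G l x))"
    with path obtain s where "le_ed s (fst x)" "v \<le> deg G l + s"
      "snd (cat_path G l x) u v = segment G (cmp G l (snd x 0 s)) u v" by blast
    then show "snd (cat_path G l x) u v \<in> Mor G" "deg G (snd (cat_path G l x) u v) = v - u"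
      using segment_in_Mor deg_segment cmp_initial_path \<open>u \<le> v\<close> by simp_all
  next
    fix u v w assume "u \<le> v" "v \<le> w" "le_ed w (fst (cat_path G l x))"
    with path obtain s where "le_ed s (fst x)" "w \<le> deg G l + s"
      "\<And>u' v'. u' \<le> v' \<Longrightarrow> v' \<le> w \<Longrightarrow>
        snd (cat_path G l x) u' v' = segment G (cmp G l (snd x 0 s)) u' v'" by blast
    then show "src G (snd (cat_path G l x) u v) = rng G (snd (cat_path G l x) v w) \<and>
        cmp G (snd (cat_path G l x) u v) (snd (cat_path G l x) v w) = snd (cat_path G l x) u w"
      using segment_cmp_segment cmp_initial_path \<open>u \<le> v\<close> \<open>v \<le> w\<close> order_trans by simp
  next
    fix u assume "le_ed u (fst (cat_path G l x))"
    with path obtain s where "le_ed s (fst x)" "u \<le> deg G l + s"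
      "snd (cat_path G l x) u u = segment G (cmp G l (snd x 0 s)) u u" by blast
    then show "snd (cat_path G l x) u u = ident G (rng G (snd (cat_path G l x) u u))"
      using deg_zero_ident segment_in_Mor deg_segment cmp_initial_path by simp
  qed
qed

lemma cat_path_initial:
  assumes "u \<le> v" "v \<le> deg G l"
  shows "snd (cat_path G l x) u v = segment G l u v"
proof -
  have "cmp G l (snd x 0 0) = l"
    using graph_morphism_ident[OF x] src_l cmp_ident_right[OF l] by simp
  then show ?thesis using snd_cat_path[of 0] assms by simp
qed

lemma cat_path_final:
  assumes s: "le_ed s (fst x)"
  shows "snd (cat_path G l x) (deg G l) (deg G l + s) = snd x 0 s"
proof -
  have "0 \<le> s" "deg G l \<le> deg G l + s" by (simp_all add: le_fun_def)
  have X: "snd x 0 s \<in> Mor G" "deg G (snd x 0 s) = s" "src G l = rng G (snd x 0 s)"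
    using graph_morphism_in_Mor[OF x \<open>0 \<le> s\<close> s] graph_morphism_deg[OF x \<open>0 \<le> s\<close> s]
      graph_morphism_rng[OF x \<open>0 \<le> s\<close> s] src_l
    by simp_all
  have "snd (cat_path G l x) (deg G l) (deg G l + s) = segment G (cmp G l (snd x 0 s)) (deg G l) (deg G l + s)"
    using snd_cat_path[OF s \<open>deg G l \<le> deg G l + s\<close> order_refl] .
  also have "\<dots> = snd x 0 s"
    using segment_cmp_right[OF l X(1,3)] X(2) by simp
  finally show ?thesis .
qed

lemma vtx_cat_path:
  assumes s: "le_ed s (fst x)"
  shows "vtx G (cat_path G l x) (deg G l + s) = vtx G x s"
proof -
  have "0 \<le> s" "deg G l \<le> deg G l + s" by (simp_all add: le_fun_def)
  have "le_ed (deg G l + s) (fst (cat_path G l x))"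
    using s by (simp add: le_ed_add_iff)
  then have "vtx G (cat_path G l x) (deg G l + s) = src G (snd (cat_path G l x) (deg G l) (deg G l + s))"
    using graph_morphism_src[OF graph_morphism_cat_path \<open>deg G l \<le> deg G l + s\<close>] by simp
  also have "\<dots> = vtx G x s"
    using cat_path_final[OF s] graph_morphism_src[OF x \<open>0 \<le> s\<close> s] by simp
  finally show ?thesis .
qed

lemma boundary_path_cat_path:
  assumes "boundary_path G x"
  shows "boundary_path G (cat_path G l x)"
proof -
  obtain nx where nx: "le_ed nx (fst x)"
    and no_edge: "\<And>s i. nx \<le> s \<Longrightarrow> le_ed s (fst x) \<Longrightarrow> enat (s i) = fst x i \<Longrightarrow>
        \<not> (\<exists>e\<in>Mor G. rng G e = vtx G x s \<and> deg G e = ebasis i)"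
    using assms unfolding boundary_path_def by blast
  have "le_ed (deg G l + nx) (fst (cat_path G l x))"
    using nx by (simp add: le_ed_add_iff)
  moreover have "\<not> (\<exists>e\<in>Mor G. rng G e = vtx G (cat_path G l x) u \<and> deg G e = ebasis i)"
    if "deg G l + nx \<le> u" "le_ed u (fst (cat_path G l x))" "enat (u i) = fst (cat_path G l x) i"
    for u i
  proof -
    define s where "s = u - deg G l"
    have "deg G l \<le> u" using that(1) by (simp add: le_fun_def) (meson add_leE)
    then have u: "u = deg G l + s" unfolding s_def by (simp add: add_diff_inverse_deg)
    have "le_ed s (fst x)" using that(2) unfolding u by (simp add: le_ed_add_iff)
    moreover have "nx \<le> s" using that(1) unfolding u by (simp add: le_fun_def)
    moreover have "enat (s i) = fst x i" using that(3) unfolding u by (cases "fst x i") simp_all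
    ultimately show ?thesis using no_edge vtx_cat_path u by simp
  qed
  ultimately show ?thesis
    using graph_morphism_cat_path unfolding boundary_path_def by blast
qed

end

end

theorem proposition3p11:
  fixes G :: "('v, 'a, 'k::finite) kgraph"
    and x y :: "('k, 'a) gmor"
    and m n p q :: "'k deg"
  assumes "is_kgraph G"
    and "in_P G x m n" and "in_P G y p q"
    and "\<not> le_ed p (fst y)"
    and "approxV G x n y p"
  defines "z \<equiv> cat_path G (snd x 0 (meet_ed n (fst x))) (shift (meet_ed p (fst y)) y)"
  shows "boundary_path G z \<and>
         (meet_ed m (fst x) = meet_ed m (fst z) \<and> meet_ed n (fst x) = meet_ed n (fst z)) \<and>
         (snd x (meet_ed m (fst x)) (meet_ed n (fst x)) = snd z (meet_ed m (fst z)) (meet_ed n (fst z)) \<and>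
         snd y (meet_ed p (fst y)) (meet_ed q (fst y)) = snd z (meet_ed n (fst z)) (meet_ed (n + q - p) (fst z)))"
proof -
  interpret k_graph G by (rule k_graph.intro) fact
  \<comment> \<open>The hypothesis \<open>\<not> le_ed p (fst y)\<close> is part of \<open>approxV\<close> and not needed separately.\<close>
  define a b where "a = meet_ed n (fst x)" and "b = meet_ed p (fst y)"
  define l y' where "l = snd x 0 a" and "y' = shift b y"
  have x: "boundary_path G x" "m \<le> n" and y: "boundary_path G y" "p \<le> q"
    using assms(2,3) unfolding in_P_def by blast+
  have glue: "vtx G x a = vtx G y b" "n - a = p - b"
    using assms(5) unfolding approxV_def a_def b_def by blast+
  have a: "le_ed a (fst x)" and b: "le_ed b (fst y)"
    unfolding a_def b_def by (rule le_ed_meet_ed)+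
  have gx: "graph_morphism G x" using x(1) unfolding boundary_path_def by blast
  have l: "l \<in> Mor G" "deg G l = a" "src G l = vtx G y' 0"
    using graph_morphism_in_Mor[OF gx _ a] graph_morphism_deg[OF gx _ a]
      graph_morphism_src[OF gx _ a] glue(1)
    unfolding l_def y'_def by simp_all
  have y': "boundary_path G y'" unfolding y'_def using boundary_path_shift[OF y(1) b] .
  then have gy': "graph_morphism G y'" unfolding boundary_path_def by blast
  have z: "z = cat_path G l y'" unfolding z_def l_def y'_def a_def b_def ..
  have meets: "meet_ed m (fst z) = meet_ed m (fst x)" "meet_ed n (fst z) = a"
    "meet_ed (n + q - p) (fst z) = a + (meet_ed q (fst y) - b)"
    using meet_ed_glue[OF glue(2)[unfolded a_def b_def] x(2) y(2)] l(2)
    unfolding z y'_def a_def b_def by simp_all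
  have "snd z (meet_ed m (fst x)) a = snd x (meet_ed m (fst x)) a"
    using cat_path_initial[OF l(1) gy' l(3)] segment_path[OF gx _ order_refl a]
      meet_ed_mono[OF x(2)] l(2)
    unfolding z l_def a_def by simp
  moreover have "snd z a (a + (meet_ed q (fst y) - b)) = snd y b (meet_ed q (fst y))"
  proof -
    have "b \<le> meet_ed q (fst y)" unfolding b_def using meet_ed_mono[OF y(2)] .
    then have "meet_ed q (fst y) - b + b = meet_ed q (fst y)"
      by (metis add.commute add_diff_inverse_deg)
    moreover have "le_ed (meet_ed q (fst y) - b) (fst y')"
      unfolding y'_def fst_shift le_ed_shift_iff[OF b] calculation by (rule le_ed_meet_ed)
    ultimately show ?thesis
      using cat_path_final[OF l(1) gy' l(3)] l(2) unfolding z y'_def by simp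
  qed
  ultimately show ?thesis
    using boundary_path_cat_path[OF l(1) gy' l(3) y'] meets unfolding z a_def b_def by simp
qed

end
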